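(* Let $H=\sum_{\mathbf{j}\in V}h_{\mathbf{j}}$ be a Hamiltonian whose frustration graph $G$ is claw-free and contains a simplicial clique $K_s$, and let $\chi$ be a simplicial mode with respect to $K_s$. Then \[ T_G(u)\Big(1+u\sum_{\mathbf{j}\in K_s}h_{\mathbf{j}}\Big)\chi\,T_G(-u)=Z_G(-u^2)\Big(1-u\sum_{\mathbf{j}\in K_s}h_{\mathbf{j}}\Big)\chi . \]
   Context: Setting: $V$ a finite set of distinct $n$-qubit Pauli strings, $H=\sum_{\mathbf{j}\in V}h_{\mathbf{j}}$ with $h_{\mathbf{j}}=b_{\mathbf{j}}\sigma^{\mathbf{j}}$, $b_{\mathbf{j}}\in\mathbb{R}\setminus\{0\}$; frustration graph $G$: edge iff terms anticommute; claw-free: no induced $K_{1,3}$. Simplicial clique: clique $K_s$ with $\Gamma(\mathbf{j})\setminus K_s$ a clique for every $\mathbf{j}\in K_s$. Simplicial mode: Pauli operator $\chi=\sigma^{\mathbf{j}^*}$, $\mathbf{j}^*\notin V$, anticommuting with $h_{\mathbf{k}}$ iff $\mathbf{k}\in K_s$. For an independent set $S$, $h_S=\prod_{\mathbf{j}\in S}h_{\mathbf{j}}$; $T_G(u)=\sum_S(-u)^{|S|}h_S$ over all independent sets of $G$; $Z_G(-u^2)=T_G(u)T_G(-u)$. *)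

theory Defs
  imports "Jordan_Normal_Form.Matrix" "HOL-Library.List_Lexorder"
begin

text \<open>Single-qubit Pauli matrices, coded 0 = I, 1 = X, 2 = Y, 3 = Z.
  Row/column index False = |0>, True = |1>.\<close>
definition pauli1 :: "nat \<Rightarrow> bool \<Rightarrow> bool \<Rightarrow> complex" where
  "pauli1 a r c =
     (if a = 0 then (if r = c then 1 else 0)
      else if a = 1 then (if r \<noteq> c then 1 else 0)
      else if a = 2 then (if r = c then 0 else if r then \<i> else - \<i>)
      else (if r \<noteq> c then 0 else if r then -1 else 1))"

definition is_pauli_string :: "nat \<Rightarrow> nat list \<Rightarrow> bool" where
  "is_pauli_string n p \<longleftrightarrow> length p = n \<and> (\<forall>a\<in>set p. a < 4)"

text \<open>The operator sigma^p = tensor product of the single-qubit Paulis (qubit k acts on bit k).\<close>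
definition pauli_mat :: "nat list \<Rightarrow> complex mat" where
  "pauli_mat p = mat (2 ^ length p) (2 ^ length p)
     (\<lambda>(r, c). \<Prod>k<length p. pauli1 (p ! k) (bit r k) (bit c k))"

definition hterm :: "(nat list \<Rightarrow> real) \<Rightarrow> nat list \<Rightarrow> complex mat" where
  "hterm b j = complex_of_real (b j) \<cdot>\<^sub>m pauli_mat j"

definition anticommute :: "complex mat \<Rightarrow> complex mat \<Rightarrow> bool" where
  "anticommute A B \<longleftrightarrow> A * B = (-1) \<cdot>\<^sub>m (B * A)"

definition frust :: "(nat list \<Rightarrow> real) \<Rightarrow> nat list \<Rightarrow> nat list \<Rightarrow> bool" where
  "frust b j k \<longleftrightarrow> anticommute (hterm b j) (hterm b k)"

definition is_clique :: "('a \<Rightarrow> 'a \<Rightarrow> bool) \<Rightarrow> 'a set \<Rightarrow> bool" where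
  "is_clique adj K \<longleftrightarrow> (\<forall>x\<in>K. \<forall>y\<in>K. x \<noteq> y \<longrightarrow> adj x y)"

definition is_indep :: "('a \<Rightarrow> 'a \<Rightarrow> bool) \<Rightarrow> 'a set \<Rightarrow> bool" where
  "is_indep adj S \<longleftrightarrow> (\<forall>x\<in>S. \<forall>y\<in>S. x \<noteq> y \<longrightarrow> \<not> adj x y)"

definition claw_free :: "'a set \<Rightarrow> ('a \<Rightarrow> 'a \<Rightarrow> bool) \<Rightarrow> bool" where
  "claw_free V adj \<longleftrightarrow>
     \<not> (\<exists>a\<in>V. \<exists>x\<in>V. \<exists>y\<in>V. \<exists>z\<in>V.
          a \<noteq> x \<and> a \<noteq> y \<and> a \<noteq> z \<and> x \<noteq> y \<and> x \<noteq> z \<and> y \<noteq> z \<and>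
          adj a x \<and> adj a y \<and> adj a z \<and>
          \<not> adj x y \<and> \<not> adj x z \<and> \<not> adj y z)"

definition nbhd :: "'a set \<Rightarrow> ('a \<Rightarrow> 'a \<Rightarrow> bool) \<Rightarrow> 'a \<Rightarrow> 'a set" where
  "nbhd V adj j = {k \<in> V. k \<noteq> j \<and> adj j k}"

definition simplicial_clique :: "'a set \<Rightarrow> ('a \<Rightarrow> 'a \<Rightarrow> bool) \<Rightarrow> 'a set \<Rightarrow> bool" where
  "simplicial_clique V adj K \<longleftrightarrow>
     K \<subseteq> V \<and> K \<noteq> {} \<and> is_clique adj K \<and> (\<forall>j\<in>K. is_clique adj (nbhd V adj j - K))"

definition msum :: "nat \<Rightarrow> ('b \<Rightarrow> complex mat) \<Rightarrow> 'b set \<Rightarrow> complex mat" where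
  "msum N f A = mat N N (\<lambda>(r, c). \<Sum>x\<in>A. f x $$ (r, c))"

definition mprod :: "nat \<Rightarrow> complex mat list \<Rightarrow> complex mat" where
  "mprod N ms = foldr (*) ms (1\<^sub>m N)"

text \<open>h_S for an independent set S (its terms commute, so the order is immaterial).\<close>
definition hS :: "nat \<Rightarrow> (nat list \<Rightarrow> real) \<Rightarrow> nat list set \<Rightarrow> complex mat" where
  "hS n b S = mprod (2 ^ n) (map (hterm b) (sorted_list_of_set S))"

definition TG :: "nat \<Rightarrow> nat list set \<Rightarrow> (nat list \<Rightarrow> real) \<Rightarrow> complex \<Rightarrow> complex mat" where
  "TG n V b u = msum (2 ^ n) (\<lambda>S. (- u) ^ card S \<cdot>\<^sub>m hS n b S) {S. S \<subseteq> V \<and> is_indep (frust b) S}"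

text \<open>Z_G(-u^2) := T_G(u) T_G(-u); the argument u is what we pass.\<close>
definition ZG_neg_sq :: "nat \<Rightarrow> nat list set \<Rightarrow> (nat list \<Rightarrow> real) \<Rightarrow> complex \<Rightarrow> complex mat" where
  "ZG_neg_sq n V b u = TG n V b u * TG n V b (- u)"

end

theory Submission
  imports Defs
begin

text \<open>Split \<open>T(-u) = T\<^sub>G(-u)\<close> according to how an independent set meets the clique \<open>K\<close>
  (in at most one vertex): \<open>T(-u) = A + u B\<close>, where \<open>A\<close> sums \<open>u\<^bsup>|S|\<^esup> h\<^sub>S\<close> over the
  independent sets \<open>S\<close> avoiding \<open>K\<close>, and \<open>B\<close> is the sum over \<open>k \<in> K\<close> of \<open>h\<^sub>k B\<^sub>k\<close>, with
  \<open>B\<^sub>k\<close> the part of \<open>A\<close> over the sets to which \<open>k\<close> can be added. As \<open>\<chi>\<close> anticommutes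
  exactly with the terms in \<open>K\<close>, it commutes with \<open>A\<close> and anticommutes with \<open>B\<close>. By
  simpliciality an independent set avoiding \<open>K\<close> contains at most one neighbour of \<open>k \<in> K\<close>, so
  \<open>h\<^sub>k\<close> commutes with \<open>h\<^sub>S\<close> if \<open>S \<union> {k}\<close> is independent and anticommutes with it otherwise.
  For \<open>h\<^sub>K\<close> the sum of the \<open>h\<^sub>k\<close> with \<open>k \<in> K\<close>, this yields \<open>h\<^sub>K A + A h\<^sub>K = 2 B\<close> and, since
  distinct terms of the clique anticommute, \<open>h\<^sub>K B = B h\<^sub>K\<close>. These four relations give
  \<open>(1 + u h\<^sub>K) \<chi> T(-u) = T(-u) (1 - u h\<^sub>K) \<chi>\<close>; multiplying by \<open>T(u)\<close> on the left gives the
  theorem.\<close>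

section \<open>Square matrices\<close>

text \<open>The library's distributivity and associativity laws for matrix products leave the inner
  dimension as a variable that the simplifier cannot guess, so they are instantiated by hand to
  \<open>N \<times> N\<close> matrices wherever they are used for rewriting.\<close>

lemma smult_minus_one_mat: "(-1) \<cdot>\<^sub>m A = - (A :: 'a :: ring_1 mat)"
  by (rule eq_matI) auto

lemma anticommute_iff: "anticommute A B \<longleftrightarrow> A * B = - (B * A)"
  by (simp add: anticommute_def smult_minus_one_mat)

lemma smult_smult_mat: "a \<cdot>\<^sub>m (c \<cdot>\<^sub>m A) = (a * c :: 'a :: semigroup_mult) \<cdot>\<^sub>m A"
  by (rule eq_matI) (auto simp: mult.assoc)

lemma one_smult_mat: "1 \<cdot>\<^sub>m A = (A :: 'a :: monoid_mult mat)"
  by (rule eq_matI) auto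

lemma uminus_zero_mat [simp]: "- 0\<^sub>m nr nc = (0\<^sub>m nr nc :: 'a :: group_add mat)"
  by (rule eq_matI) auto

lemma add_smult_self_mat: "A + c \<cdot>\<^sub>m A = (1 + c) \<cdot>\<^sub>m (A :: 'a :: ring_1 mat)"
  by (rule eq_matI) (auto simp: algebra_simps)

lemma diff_smult_self_mat: "A - c \<cdot>\<^sub>m A = (1 - c) \<cdot>\<^sub>m (A :: 'a :: ring_1 mat)"
  by (rule eq_matI) (auto simp: algebra_simps)

lemma eq_of_diff_eq_zero_mat:
  fixes A B :: "'a :: ab_group_add mat"
  assumes "A - B = 0\<^sub>m nr nc" "A \<in> carrier_mat nr nc" "B \<in> carrier_mat nr nc"
  shows "A = B"
proof (rule eq_matI)
  fix i j assume ij: "i < dim_row B" "j < dim_col B"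
  have "A $$ (i, j) - B $$ (i, j) = (A - B) $$ (i, j)"
    using assms(2,3) ij by simp
  also have "\<dots> = 0"
    unfolding assms(1) using assms(3) ij by simp
  finally show "A $$ (i, j) = B $$ (i, j)" by simp
qed (use assms in auto)

lemma commute_or_anticommute_smult:
  fixes A B :: "complex mat"
  assumes "A \<in> carrier_mat N N" "B \<in> carrier_mat N N"
    and "A * B = B * A \<or> anticommute A B"
  shows "(a \<cdot>\<^sub>m A) * (c \<cdot>\<^sub>m B) = (c \<cdot>\<^sub>m B) * (a \<cdot>\<^sub>m A) \<or> anticommute (a \<cdot>\<^sub>m A) (c \<cdot>\<^sub>m B)"
  using assms
  by (auto simp: anticommute_def smult_smult_mat mult.commute mult.left_commute
      mult_smult_distrib[where nr = N and n = N and nc = N]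
      mult_smult_assoc_mat[where nr = N and n = N and nc = N])

lemma intertwining_from_relations:
  fixes A B H X :: "complex mat"
  assumes carrier: "A \<in> carrier_mat N N" "B \<in> carrier_mat N N" "H \<in> carrier_mat N N" "X \<in> carrier_mat N N"
    and XA: "X * A = A * X" and XB: "X * B = - (B * X)"
    and HA: "H * A + A * H = 2 \<cdot>\<^sub>m B" and HB: "H * B = B * H"
  shows "(1\<^sub>m N + u \<cdot>\<^sub>m H) * X * (A + u \<cdot>\<^sub>m B) = (A + u \<cdot>\<^sub>m B) * (1\<^sub>m N - u \<cdot>\<^sub>m H) * X"
proof -
  note distribs = add_mult_distrib_mat[where nr = N and n = N and nc = N]
    mult_add_distrib_mat[where nr = N and n = N and nc = N]
    minus_mult_distrib_mat[where nr = N and n = N and nc = N]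
    mult_minus_distrib_mat[where nr = N and n = N and nc = N]
    mult_smult_distrib[where nr = N and n = N and nc = N]
    mult_smult_assoc_mat[where nr = N and n = N and nc = N]
  have X_T: "X * (A + u \<cdot>\<^sub>m B) = (A - u \<cdot>\<^sub>m B) * X"
    using carrier by (simp add: distribs XA XB) (rule eq_matI; simp)
  have "(1\<^sub>m N + u \<cdot>\<^sub>m H) * (A - u \<cdot>\<^sub>m B) - (A + u \<cdot>\<^sub>m B) * (1\<^sub>m N - u \<cdot>\<^sub>m H)
     = u \<cdot>\<^sub>m (H * A + A * H - 2 \<cdot>\<^sub>m B) - (u * u) \<cdot>\<^sub>m (H * B - B * H)"
    using carrier by (simp add: distribs) (rule eq_matI; simp add: algebra_simps)
  also have "\<dots> = 0\<^sub>m N N"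
    using carrier by (simp add: HA HB) (rule eq_matI; simp)
  finally have T_H: "(1\<^sub>m N + u \<cdot>\<^sub>m H) * (A - u \<cdot>\<^sub>m B) = (A + u \<cdot>\<^sub>m B) * (1\<^sub>m N - u \<cdot>\<^sub>m H)"
    by (rule eq_of_diff_eq_zero_mat)
      (use carrier in \<open>auto intro!: mult_carrier_mat[where nr = N and n = N and nc = N] minus_carrier_mat\<close>)
  have "(1\<^sub>m N + u \<cdot>\<^sub>m H) * X * (A + u \<cdot>\<^sub>m B) = (1\<^sub>m N + u \<cdot>\<^sub>m H) * (X * (A + u \<cdot>\<^sub>m B))"
    using carrier by (intro assoc_mult_mat[of _ N N _ N _ N]) auto
  also have "\<dots> = (1\<^sub>m N + u \<cdot>\<^sub>m H) * (A - u \<cdot>\<^sub>m B) * X"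
    unfolding X_T using carrier
    by (intro assoc_mult_mat[of _ N N _ N _ N, symmetric])
      (auto intro!: mult_carrier_mat[where nr = N and n = N and nc = N] minus_carrier_mat)
  finally show ?thesis
    unfolding T_H .
qed

section \<open>Pauli strings commute or anticommute\<close>

lemma pauli_mat_carrier: "pauli_mat p \<in> carrier_mat (2 ^ length p) (2 ^ length p)"
  by (simp add: pauli_mat_def)

lemma pauli_mat_Cons_index:
  assumes "r < 2 ^ Suc (length p)" "c < 2 ^ Suc (length p)"
  shows "pauli_mat (a # p) $$ (r, c) = pauli1 a (odd r) (odd c) * pauli_mat p $$ (r div 2, c div 2)"
proof -
  have "r div 2 < 2 ^ length p" "c div 2 < 2 ^ length p"
    using assms by auto
  then show ?thesis
    using assms by (simp add: pauli_mat_def prod.lessThan_Suc_shift bit_Suc bit_0 del: prod.lessThan_Suc)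
qed

lemma sum_lessThan_double: "(\<Sum>m<2 * (M :: nat). g m) = (\<Sum>m<M. g (2 * m) + g (2 * m + 1))"
  by (induction M) (auto simp: sum.distrib add_ac)

text \<open>Qubit 0 is the parity bit of the row and column indices, so the product of two Pauli string
  matrices factors qubit by qubit.\<close>
lemma pauli_mat_Cons_mult_index:
  assumes "length q = length p" "r < 2 ^ Suc (length p)" "c < 2 ^ Suc (length p)"
  shows "(pauli_mat (a # p) * pauli_mat (a' # q)) $$ (r, c) =
     (\<Sum>z\<in>UNIV. pauli1 a (odd r) z * pauli1 a' z (odd c))
       * (pauli_mat p * pauli_mat q) $$ (r div 2, c div 2)"
proof -
  let ?L = "length p"
  have rc: "r div 2 < 2 ^ ?L" "c div 2 < 2 ^ ?L"
    using assms by auto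
  have "(pauli_mat (a # p) * pauli_mat (a' # q)) $$ (r, c) =
     (\<Sum>m<2 * 2 ^ ?L. pauli_mat (a # p) $$ (r, m) * pauli_mat (a' # q) $$ (m, c))"
    using assms pauli_mat_carrier[of "a # p"] pauli_mat_carrier[of "a' # q"]
    by (auto simp: scalar_prod_def intro!: sum.cong)
  also have "\<dots> = (\<Sum>m<2 ^ ?L. pauli_mat (a # p) $$ (r, 2 * m) * pauli_mat (a' # q) $$ (2 * m, c)
       + pauli_mat (a # p) $$ (r, 2 * m + 1) * pauli_mat (a' # q) $$ (2 * m + 1, c))"
    by (rule sum_lessThan_double)
  also have "\<dots> = (\<Sum>m<2 ^ ?L. (\<Sum>z\<in>UNIV. pauli1 a (odd r) z * pauli1 a' z (odd c))
       * (pauli_mat p $$ (r div 2, m) * pauli_mat q $$ (m, c div 2)))"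
    using assms by (intro sum.cong) (simp_all add: pauli_mat_Cons_index UNIV_bool algebra_simps)
  also have "\<dots> = (\<Sum>z\<in>UNIV. pauli1 a (odd r) z * pauli1 a' z (odd c))
      * (pauli_mat p * pauli_mat q) $$ (r div 2, c div 2)"
    using rc assms pauli_mat_carrier[of p] pauli_mat_carrier[of q]
    by (auto simp: scalar_prod_def sum_distrib_left intro!: sum.cong)
  finally show ?thesis .
qed

lemma pauli1_commute_or_anticommute:
  assumes "a < 4" "a' < 4"
  shows "\<exists>s::complex. (s = 1 \<or> s = -1) \<and> (\<forall>x y.
    (\<Sum>z\<in>UNIV. pauli1 a x z * pauli1 a' z y) = s * (\<Sum>z\<in>UNIV. pauli1 a' x z * pauli1 a z y))"
proof -
  have "a = 0 \<or> a = 1 \<or> a = 2 \<or> a = 3" "a' = 0 \<or> a' = 1 \<or> a' = 2 \<or> a' = 3"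
    using assms by auto
  then show ?thesis
    by (elim disjE) (auto simp: pauli1_def UNIV_bool)
qed

lemma pauli_mat_mult_index_sign:
  assumes "length q = length p" "\<forall>a\<in>set p. a < 4" "\<forall>a\<in>set q. a < 4"
  shows "\<exists>s::complex. (s = 1 \<or> s = -1) \<and> (\<forall>r < 2 ^ length p. \<forall>c < 2 ^ length p.
           (pauli_mat p * pauli_mat q) $$ (r, c) = s * (pauli_mat q * pauli_mat p) $$ (r, c))"
  using assms
proof (induction p arbitrary: q)
  case Nil
  then show ?case by auto
next
  case (Cons a p q0)
  then obtain a' q where q0: "q0 = a' # q" and lq: "length q = length p"
    by (cases q0) auto
  obtain s1 :: complex where s1: "s1 = 1 \<or> s1 = -1" and IH: "\<forall>r < 2 ^ length p. \<forall>c < 2 ^ length p.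
           (pauli_mat p * pauli_mat q) $$ (r, c) = s1 * (pauli_mat q * pauli_mat p) $$ (r, c)"
    using Cons.IH[of q] Cons.prems q0 lq by auto
  obtain s2 :: complex where s2: "s2 = 1 \<or> s2 = -1" and qubit: "\<forall>x y.
    (\<Sum>z\<in>UNIV. pauli1 a x z * pauli1 a' z y) = s2 * (\<Sum>z\<in>UNIV. pauli1 a' x z * pauli1 a z y)"
    using pauli1_commute_or_anticommute[of a a'] Cons.prems q0 by auto
  have "(pauli_mat (a # p) * pauli_mat q0) $$ (r, c) = s2 * s1 * (pauli_mat q0 * pauli_mat (a # p)) $$ (r, c)"
    if "r < 2 ^ Suc (length p)" "c < 2 ^ Suc (length p)" for r c
  proof -
    have "(pauli_mat (a # p) * pauli_mat q0) $$ (r, c) = s2 * s1 *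
        ((\<Sum>z\<in>UNIV. pauli1 a' (odd r) z * pauli1 a z (odd c))
          * (pauli_mat q * pauli_mat p) $$ (r div 2, c div 2))"
      using that lq IH qubit unfolding q0 by (simp add: pauli_mat_Cons_mult_index[of q p])
    also have "\<dots> = s2 * s1 * (pauli_mat q0 * pauli_mat (a # p)) $$ (r, c)"
      using that lq unfolding q0 by (simp add: pauli_mat_Cons_mult_index[of p q])
    finally show ?thesis .
  qed
  moreover have "s2 * s1 = 1 \<or> s2 * s1 = -1"
    using s1 s2 by auto
  ultimately show ?case by auto
qed

lemma pauli_mat_commute_or_anticommute:
  assumes "is_pauli_string n p" "is_pauli_string n q"
  shows "pauli_mat p * pauli_mat q = pauli_mat q * pauli_mat p \<or> anticommute (pauli_mat p) (pauli_mat q)"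
proof -
  have dims: "length p = n" "length q = n"
    using assms by (auto simp: is_pauli_string_def)
  obtain s :: complex where s: "s = 1 \<or> s = -1" and entries: "\<forall>r < 2 ^ n. \<forall>c < 2 ^ n.
      (pauli_mat p * pauli_mat q) $$ (r, c) = s * (pauli_mat q * pauli_mat p) $$ (r, c)"
    using pauli_mat_mult_index_sign[of q p] assms dims by (auto simp: is_pauli_string_def)
  have "pauli_mat p * pauli_mat q = s \<cdot>\<^sub>m (pauli_mat q * pauli_mat p)"
    using entries dims pauli_mat_carrier[of p] pauli_mat_carrier[of q] by (intro eq_matI) auto
  then show ?thesis
    using s by (auto simp: anticommute_def one_smult_mat)
qed

lemma pauli_mat_carrier_string: "is_pauli_string n p \<Longrightarrow> pauli_mat p \<in> carrier_mat (2 ^ n) (2 ^ n)"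
  using pauli_mat_carrier[of p] by (simp add: is_pauli_string_def)

lemma smult_pauli_mat_commute_or_anticommute:
  assumes "is_pauli_string n p" "is_pauli_string n q"
  shows "(a \<cdot>\<^sub>m pauli_mat p) * (c \<cdot>\<^sub>m pauli_mat q) = (c \<cdot>\<^sub>m pauli_mat q) * (a \<cdot>\<^sub>m pauli_mat p)
    \<or> anticommute (a \<cdot>\<^sub>m pauli_mat p) (c \<cdot>\<^sub>m pauli_mat q)"
  using assms pauli_mat_carrier_string
  by (intro commute_or_anticommute_smult pauli_mat_commute_or_anticommute) auto

section \<open>Sums and ordered products of matrices\<close>

lemma msum_carrier [simp]: "msum N f A \<in> carrier_mat N N"
  by (simp add: msum_def)

lemma msum_dim [simp]: "dim_row (msum N f A) = N" "dim_col (msum N f A) = N"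
  by (simp_all add: msum_def)

lemma msum_index [simp]: "i < N \<Longrightarrow> j < N \<Longrightarrow> msum N f A $$ (i, j) = (\<Sum>x\<in>A. f x $$ (i, j))"
  by (simp add: msum_def)

lemma msum_cong: "(\<And>x. x \<in> A \<Longrightarrow> f x = g x) \<Longrightarrow> msum N f A = msum N g A"
  by (simp add: msum_def)

lemma msum_add:
  assumes "\<And>x. x \<in> A \<Longrightarrow> f x \<in> carrier_mat N N" "\<And>x. x \<in> A \<Longrightarrow> g x \<in> carrier_mat N N"
  shows "msum N (\<lambda>x. f x + g x) A = msum N f A + msum N g A"
  using assms[THEN carrier_matD(1)] assms[THEN carrier_matD(2)]
  by (intro eq_matI) (auto simp: sum.distrib intro!: sum.cong)

lemma msum_diff:
  assumes "\<And>x. x \<in> A \<Longrightarrow> f x \<in> carrier_mat N N" "\<And>x. x \<in> A \<Longrightarrow> g x \<in> carrier_mat N N"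
  shows "msum N (\<lambda>x. f x - g x) A = msum N f A - msum N g A"
  using assms[THEN carrier_matD(1)] assms[THEN carrier_matD(2)]
  by (intro eq_matI) (auto simp: sum_subtractf intro!: sum.cong)

lemma msum_smult:
  assumes "\<And>x. x \<in> A \<Longrightarrow> f x \<in> carrier_mat N N"
  shows "msum N (\<lambda>x. c \<cdot>\<^sub>m f x) A = c \<cdot>\<^sub>m msum N f A"
  using assms[THEN carrier_matD(1)] assms[THEN carrier_matD(2)]
  by (intro eq_matI) (auto simp: sum_distrib_left intro!: sum.cong)

lemma msum_uminus:
  assumes "\<And>x. x \<in> A \<Longrightarrow> f x \<in> carrier_mat N N"
  shows "msum N (\<lambda>x. - f x) A = - msum N f A"
  using assms[THEN carrier_matD(1)] assms[THEN carrier_matD(2)]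
  by (intro eq_matI) (auto simp: sum_negf intro!: sum.cong)

lemma msum_mult_left:
  assumes "M \<in> carrier_mat N N" "\<And>x. x \<in> A \<Longrightarrow> f x \<in> carrier_mat N N"
  shows "msum N (\<lambda>x. M * f x) A = M * msum N f A"
proof (rule eq_matI)
  fix i j assume "i < dim_row (M * msum N f A)" "j < dim_col (M * msum N f A)"
  then have ij: "i < N" "j < N"
    using assms by auto
  have "msum N (\<lambda>x. M * f x) A $$ (i, j) = (\<Sum>x\<in>A. \<Sum>l<N. M $$ (i, l) * f x $$ (l, j))"
    using ij assms(1) assms(2)[THEN carrier_matD(1)] assms(2)[THEN carrier_matD(2)]
    by (auto simp: scalar_prod_def intro!: sum.cong)
  also have "\<dots> = (\<Sum>l<N. M $$ (i, l) * (\<Sum>x\<in>A. f x $$ (l, j)))"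
    by (subst sum.swap) (simp add: sum_distrib_left)
  also have "\<dots> = (M * msum N f A) $$ (i, j)"
    using ij assms by (auto simp: scalar_prod_def intro!: sum.cong)
  finally show "msum N (\<lambda>x. M * f x) A $$ (i, j) = (M * msum N f A) $$ (i, j)" .
qed (use assms in auto)

lemma msum_mult_right:
  assumes "M \<in> carrier_mat N N" "\<And>x. x \<in> A \<Longrightarrow> f x \<in> carrier_mat N N"
  shows "msum N (\<lambda>x. f x * M) A = msum N f A * M"
proof (rule eq_matI)
  fix i j assume "i < dim_row (msum N f A * M)" "j < dim_col (msum N f A * M)"
  then have ij: "i < N" "j < N"
    using assms by auto
  have "msum N (\<lambda>x. f x * M) A $$ (i, j) = (\<Sum>x\<in>A. \<Sum>l<N. f x $$ (i, l) * M $$ (l, j))"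
    using ij assms(1) assms(2)[THEN carrier_matD(1)] assms(2)[THEN carrier_matD(2)]
    by (auto simp: scalar_prod_def intro!: sum.cong)
  also have "\<dots> = (\<Sum>l<N. (\<Sum>x\<in>A. f x $$ (i, l)) * M $$ (l, j))"
    by (subst sum.swap) (simp add: sum_distrib_right)
  also have "\<dots> = (msum N f A * M) $$ (i, j)"
    using ij assms by (auto simp: scalar_prod_def intro!: sum.cong)
  finally show "msum N (\<lambda>x. f x * M) A $$ (i, j) = (msum N f A * M) $$ (i, j)" .
qed (use assms in auto)

lemma msum_union_disjoint:
  "finite A \<Longrightarrow> finite B \<Longrightarrow> A \<inter> B = {} \<Longrightarrow> msum N f (A \<union> B) = msum N f A + msum N f B"
  by (intro eq_matI) (auto simp: sum.union_disjoint)

lemma msum_UNION_disjoint: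
  assumes "finite I" "\<And>i. i \<in> I \<Longrightarrow> finite (A i)"
    "\<And>i j. i \<in> I \<Longrightarrow> j \<in> I \<Longrightarrow> i \<noteq> j \<Longrightarrow> A i \<inter> A j = {}"
  shows "msum N f (\<Union>i\<in>I. A i) = msum N (\<lambda>i. msum N f (A i)) I"
  using assms by (intro eq_matI) (auto simp: sum.UNION_disjoint intro!: sum.cong)

lemma msum_reindex: "inj_on g A \<Longrightarrow> msum N f (g ` A) = msum N (\<lambda>x. f (g x)) A"
  by (intro eq_matI) (auto simp: sum.reindex)

lemma msum_swap: "msum N (\<lambda>x. msum N (f x) B) A = msum N (\<lambda>y. msum N (\<lambda>x. f x y) A) B"
  by (intro eq_matI) (auto intro: sum.swap)

lemma msum_indicator_smult:
  assumes "finite A" "\<And>x. x \<in> A \<Longrightarrow> f x \<in> carrier_mat N N"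
  shows "msum N (\<lambda>x. (if x \<in> B then c else 0) \<cdot>\<^sub>m f x) A = c \<cdot>\<^sub>m msum N f (A \<inter> B)"
  using assms(1) assms(2)[THEN carrier_matD(1)] assms(2)[THEN carrier_matD(2)]
  by (intro eq_matI) (auto simp: sum_distrib_left sum.inter_restrict if_distrib intro!: sum.cong)

lemma msum_antisym_eq_zero:
  assumes "\<And>x y. x \<in> A \<Longrightarrow> y \<in> A \<Longrightarrow> f x y = - f y x"
    and "\<And>x y. x \<in> A \<Longrightarrow> y \<in> A \<Longrightarrow> f x y \<in> carrier_mat N N"
  shows "msum N (\<lambda>x. msum N (f x) A) A = 0\<^sub>m N N"
proof (rule eq_matI)
  fix i j assume "i < dim_row (0\<^sub>m N N :: complex mat)" "j < dim_col (0\<^sub>m N N :: complex mat)"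
  then have ij: "i < N" "j < N" by auto
  define s where "s = (\<Sum>x\<in>A. \<Sum>y\<in>A. f x y $$ (i, j))"
  have "s = (\<Sum>x\<in>A. \<Sum>y\<in>A. - f y x $$ (i, j))"
    unfolding s_def using assms ij by (intro sum.cong refl) (metis carrier_matD index_uminus_mat(1))
  also have "\<dots> = - s"
    unfolding s_def by (subst sum.swap) (simp add: sum_negf)
  finally have "s = 0" by simp
  then show "msum N (\<lambda>x. msum N (f x) A) A $$ (i, j) = 0\<^sub>m N N $$ (i, j)"
    using ij by (simp add: s_def)
qed auto

lemma mprod_carrier: "(\<And>M. M \<in> set Ms \<Longrightarrow> M \<in> carrier_mat N N) \<Longrightarrow> mprod N Ms \<in> carrier_mat N N"
  unfolding mprod_def by (induction Ms) (auto intro!: mult_carrier_mat[of _ N N])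

lemma mprod_Cons: "mprod N (M # Ms) = M * mprod N Ms"
  by (simp add: mprod_def)

lemma mprod_commute_sign:
  fixes M :: "complex mat"
  assumes "M \<in> carrier_mat N N" "\<And>x. x \<in> set xs \<Longrightarrow> f x \<in> carrier_mat N N"
    and "\<And>x. x \<in> set xs \<Longrightarrow> f x * M = (if P x then - (M * f x) else M * f x)"
  shows "mprod N (map f xs) * M = (-1) ^ length (filter P xs) \<cdot>\<^sub>m (M * mprod N (map f xs))"
  using assms(2,3)
proof (induction xs)
  case Nil
  then show ?case
    using assms(1) by (simp add: mprod_def one_smult_mat)
next
  case (Cons x xs)
  let ?R = "mprod N (map f xs)" and ?s = "(-1 :: complex) ^ length (filter P xs)"
    and ?t = "if P x then -1 else 1 :: complex"
  have R: "?R \<in> carrier_mat N N" and fx: "f x \<in> carrier_mat N N"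
    using Cons.prems by (auto intro!: mprod_carrier)
  have fxM: "f x * M = ?t \<cdot>\<^sub>m (M * f x)"
    using Cons.prems(2)[of x] by (simp add: smult_minus_one_mat one_smult_mat)
  have "mprod N (map f (x # xs)) * M = f x * (?R * M)"
    using R fx assms(1) by (simp add: mprod_Cons assoc_mult_mat[of _ N N _ N _ N])
  also have "?R * M = ?s \<cdot>\<^sub>m (M * ?R)"
    using Cons.prems by (intro Cons.IH) auto
  also have "f x * (?s \<cdot>\<^sub>m (M * ?R)) = ?s \<cdot>\<^sub>m ((f x * M) * ?R)"
    using R fx assms(1)
    by (simp add: mult_smult_distrib[where nr = N and n = N and nc = N] assoc_mult_mat[of _ N N _ N _ N])
  also have "\<dots> = (?t * ?s) \<cdot>\<^sub>m (M * (f x * ?R))"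
    unfolding fxM using R fx assms(1)
    by (simp add: mult_smult_assoc_mat[where nr = N and n = N and nc = N] smult_smult_mat mult.commute)
  finally show ?case by (simp add: mprod_Cons)
qed

lemma mprod_insort:
  fixes f :: "'a :: linorder \<Rightarrow> complex mat"
  assumes "f k \<in> carrier_mat N N"
    and "\<And>x. x \<in> set xs \<Longrightarrow> f x \<in> carrier_mat N N \<and> f k * f x = f x * f k"
  shows "mprod N (map f (insort k xs)) = f k * mprod N (map f xs)"
  using assms(2)
proof (induction xs)
  case (Cons x xs)
  have R: "mprod N (map f xs) \<in> carrier_mat N N" and fx: "f x \<in> carrier_mat N N"
    using Cons.prems by (auto intro!: mprod_carrier)
  show ?case
  proof (cases "k \<le> x")
    case False
    then have "mprod N (map f (insort k (x # xs))) = f x * (f k * mprod N (map f xs))"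
      using Cons by (simp add: mprod_Cons)
    also have "\<dots> = (f x * f k) * mprod N (map f xs)"
      using assms(1) R fx by (simp add: assoc_mult_mat[of _ N N _ N _ N])
    also have "\<dots> = (f k * f x) * mprod N (map f xs)"
      using Cons.prems[of x] by simp
    also have "\<dots> = f k * (f x * mprod N (map f xs))"
      using assms(1) R fx by (simp add: assoc_mult_mat[of _ N N _ N _ N])
    finally show ?thesis
      by (simp add: mprod_Cons)
  qed (simp add: mprod_Cons)
qed (simp add: mprod_def)

lemma TG_carrier: "TG n V b u \<in> carrier_mat (2 ^ n) (2 ^ n)"
  by (simp add: TG_def)

section \<open>Expansion over independent sets around a simplicial clique\<close>

locale simplicial_mode =
  fixes n :: nat and V :: "nat list set" and b :: "nat list \<Rightarrow> real" and K :: "nat list set"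
    and chi :: "complex mat" and u :: complex
  assumes finite_V: "finite V"
    and hterm_carrier: "\<And>j. j \<in> V \<Longrightarrow> hterm b j \<in> carrier_mat (2 ^ n) (2 ^ n)"
    and hterm_commute_or_anticommute: "\<And>j k. j \<in> V \<Longrightarrow> k \<in> V \<Longrightarrow>
      hterm b j * hterm b k = hterm b k * hterm b j \<or> anticommute (hterm b j) (hterm b k)"
    and simplicial: "simplicial_clique V (frust b) K"
    and chi_carrier: "chi \<in> carrier_mat (2 ^ n) (2 ^ n)"
    and chi_commute_or_anticommute: "\<And>k. k \<in> V \<Longrightarrow>
      chi * hterm b k = hterm b k * chi \<or> anticommute chi (hterm b k)"
    and chi_anticommute_iff: "\<And>k. k \<in> V \<Longrightarrow> anticommute chi (hterm b k) \<longleftrightarrow> k \<in> K"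
begin

abbreviation N :: nat where "N \<equiv> 2 ^ n"
abbreviation h :: "nat list \<Rightarrow> complex mat" where "h \<equiv> hterm b"
abbreviation adj :: "nat list \<Rightarrow> nat list \<Rightarrow> bool" where "adj \<equiv> frust b"

lemmas square_mult_assoc = assoc_mult_mat[of _ N N _ N _ N]
lemmas square_mult_smult = mult_smult_distrib[where nr = N and n = N and nc = N]
  mult_smult_assoc_mat[where nr = N and n = N and nc = N]

lemma K_subset_V: "K \<subseteq> V" and K_clique: "is_clique adj K" and finite_K: "finite K"
  using simplicial finite_V by (auto simp: simplicial_clique_def intro: finite_subset)

lemma h_commute: "j \<in> V \<Longrightarrow> k \<in> V \<Longrightarrow> \<not> adj j k \<Longrightarrow> h j * h k = h k * h j"
  using hterm_commute_or_anticommute[of j k] by (auto simp: frust_def)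

lemma h_anticommute: "adj j k \<Longrightarrow> h j * h k = - (h k * h j)"
  by (simp add: frust_def anticommute_iff)

lemma adj_sym: "adj j k \<Longrightarrow> adj k j"
  by (simp add: frust_def anticommute_iff)

lemma chi_commute: "k \<in> V \<Longrightarrow> k \<notin> K \<Longrightarrow> chi * h k = h k * chi"
  using chi_commute_or_anticommute[of k] chi_anticommute_iff[of k] by auto

lemma chi_anticommute: "k \<in> K \<Longrightarrow> chi * h k = - (h k * chi)"
  using chi_anticommute_iff[of k] K_subset_V by (auto simp: anticommute_iff)

lemma hS_carrier: "S \<subseteq> V \<Longrightarrow> finite S \<Longrightarrow> hS n b S \<in> carrier_mat N N"
  unfolding hS_def by (rule mprod_carrier) (auto intro: hterm_carrier)

lemma hS_insert:
  assumes "finite R" "R \<subseteq> V" "k \<in> V" "k \<notin> R" "\<forall>j\<in>R. \<not> adj k j"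
  shows "hS n b (insert k R) = h k * hS n b R"
proof -
  have "sorted_list_of_set (insert k R) = insort k (sorted_list_of_set R)"
    using assms(1,4) by (simp add: sorted_list_of_set_insert)
  moreover have "h j \<in> carrier_mat N N \<and> h k * h j = h j * h k" if "j \<in> R" for j
    using that assms by (auto intro: hterm_carrier h_commute)
  ultimately show ?thesis
    unfolding hS_def using assms(1) hterm_carrier[OF assms(3)] by (auto intro!: mprod_insort)
qed

lemma hS_commute_sign:
  assumes "M \<in> carrier_mat N N" "finite R" "R \<subseteq> V"
    and "\<And>j. j \<in> R \<Longrightarrow> h j * M = (if P j then - (M * h j) else M * h j)"
  shows "hS n b R * M = (-1) ^ card {j \<in> R. P j} \<cdot>\<^sub>m (M * hS n b R)"
proof -
  have "length (filter P (sorted_list_of_set R)) = card {j \<in> R. P j}"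
    using assms(2) by (simp add: distinct_length_filter Collect_conj_eq Int_commute)
  moreover have "hS n b R * M = (-1) ^ length (filter P (sorted_list_of_set R)) \<cdot>\<^sub>m (M * hS n b R)"
    unfolding hS_def using assms by (intro mprod_commute_sign) (auto intro: hterm_carrier)
  ultimately show ?thesis by simp
qed

definition indeps :: "nat list set set" where
  "indeps = {S. S \<subseteq> V \<and> is_indep adj S}"

definition indeps_off_K :: "nat list set set" where
  "indeps_off_K = {S \<in> indeps. S \<inter> K = {}}"

definition extendable :: "nat list \<Rightarrow> nat list set set" where
  "extendable k = {R \<in> indeps_off_K. \<forall>j\<in>R. \<not> adj k j}"

definition weighted_hS :: "nat list set \<Rightarrow> complex mat" where
  "weighted_hS S = u ^ card S \<cdot>\<^sub>m hS n b S"

lemma finite_indeps: "finite indeps"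
  using finite_V unfolding indeps_def by (auto intro: finite_subset[of _ "Pow V"])

lemma finite_indeps_off_K: "finite indeps_off_K"
  using finite_indeps by (auto simp: indeps_off_K_def)

lemma indepsD: "S \<in> indeps \<Longrightarrow> S \<subseteq> V \<and> finite S"
  using finite_V by (auto simp: indeps_def intro: finite_subset)

lemma extendable_subset: "extendable k \<subseteq> indeps_off_K" and indeps_off_K_subset: "indeps_off_K \<subseteq> indeps"
  by (auto simp: extendable_def indeps_off_K_def)

lemma weighted_hS_carrier: "S \<in> indeps \<Longrightarrow> weighted_hS S \<in> carrier_mat N N"
  unfolding weighted_hS_def using indepsD hS_carrier by simp

lemma weighted_hS_carrier_off_K: "S \<in> indeps_off_K \<Longrightarrow> weighted_hS S \<in> carrier_mat N N"
  using weighted_hS_carrier indeps_off_K_subset by blast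

lemma h_carrier_K: "k \<in> K \<Longrightarrow> h k \<in> carrier_mat N N"
  using K_subset_V hterm_carrier by blast

text \<open>Simpliciality: the neighbours of \<open>k \<in> K\<close> outside \<open>K\<close> form a clique, so an independent set
  avoiding \<open>K\<close> contains at most one of them.\<close>
lemma card_neighbours_indeps_off_K:
  assumes k: "k \<in> K" and R: "R \<in> indeps_off_K"
  shows "card {j \<in> R. adj k j} = (if R \<in> extendable k then 0 else 1)"
proof (cases "R \<in> extendable k")
  case True
  then have empty: "{j \<in> R. adj k j} = {}"
    by (auto simp: extendable_def)
  show ?thesis
    unfolding empty using True by simp
next
  case False
  then obtain j0 where j0: "j0 \<in> R" "adj k j0"
    using R by (auto simp: extendable_def)
  have R_indep: "is_indep adj R" and R_off: "R \<subseteq> V - K"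
    using R by (auto simp: indeps_off_K_def indeps_def)
  have clique: "is_clique adj (nbhd V adj k - K)"
    using simplicial k by (auto simp: simplicial_clique_def)
  have "j = j0" if j: "j \<in> R" "adj k j" for j
  proof (rule ccontr)
    assume ne: "j \<noteq> j0"
    have "j \<in> nbhd V adj k - K" "j0 \<in> nbhd V adj k - K"
      using j j0 R_off k by (auto simp: nbhd_def)
    then have "adj j j0"
      using clique ne unfolding is_clique_def by blast
    then show False
      using R_indep j j0 ne unfolding is_indep_def by blast
  qed
  then have singleton: "{j \<in> R. adj k j} = {j0}"
    using j0 by blast
  show ?thesis
    unfolding singleton using False by simp
qed

lemma weighted_hS_mult_h:
  assumes k: "k \<in> K" and R: "R \<in> indeps_off_K"
  shows "weighted_hS R * h k = (if R \<in> extendable k then 1 else -1) \<cdot>\<^sub>m (h k * weighted_hS R)"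
proof -
  have RV: "R \<subseteq> V" "finite R"
    using R indeps_off_K_subset indepsD by auto
  have hS: "hS n b R \<in> carrier_mat N N" and hk: "h k \<in> carrier_mat N N"
    using RV hS_carrier k h_carrier_K by auto
  have "h j * h k = (if adj k j then - (h k * h j) else h k * h j)" if "j \<in> R" for j
    using that RV k K_subset_V by (auto intro: h_anticommute adj_sym h_commute)
  then have "hS n b R * h k = (-1) ^ card {j \<in> R. adj k j} \<cdot>\<^sub>m (h k * hS n b R)"
    using RV by (intro hS_commute_sign hk)
  then have "hS n b R * h k = (if R \<in> extendable k then 1 else -1) \<cdot>\<^sub>m (h k * hS n b R)"
    unfolding card_neighbours_indeps_off_K[OF k R] by (simp add: if_distrib)
  then show ?thesis
    using hS hk by (simp add: weighted_hS_def square_mult_smult smult_smult_mat mult.commute)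
qed

lemma weighted_hS_mult_chi:
  assumes R: "R \<in> indeps_off_K"
  shows "weighted_hS R * chi = chi * weighted_hS R"
proof -
  have RV: "R \<subseteq> V" "finite R" and RK: "R \<inter> K = {}"
    using R indeps_off_K_subset indepsD by (auto simp: indeps_off_K_def)
  have "hS n b R * chi = (-1) ^ card {j \<in> R. False} \<cdot>\<^sub>m (chi * hS n b R)"
    using RV RK chi_commute[symmetric] by (intro hS_commute_sign chi_carrier) auto
  then show ?thesis
    using RV hS_carrier chi_carrier by (simp add: weighted_hS_def square_mult_smult one_smult_mat)
qed

lemma indeps_meets_K_once:
  assumes "S \<in> indeps" "k \<in> S \<inter> K" "k' \<in> S \<inter> K"
  shows "k = k'"
proof (rule ccontr)
  assume "k \<noteq> k'"
  then have "adj k k'"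
    using assms(2,3) K_clique by (auto simp: is_clique_def)
  then show False
    using assms \<open>k \<noteq> k'\<close> by (auto simp: indeps_def is_indep_def)
qed

lemma indeps_containing_eq:
  assumes k: "k \<in> K"
  shows "{S \<in> indeps. k \<in> S} = insert k ` extendable k"
proof
  show "{S \<in> indeps. k \<in> S} \<subseteq> insert k ` extendable k"
  proof
    fix S assume S: "S \<in> {S \<in> indeps. k \<in> S}"
    then have "S - {k} \<in> extendable k"
      using indeps_meets_K_once[of S k] k
      by (auto simp: extendable_def indeps_off_K_def indeps_def is_indep_def)
    moreover have "S = insert k (S - {k})"
      using S by auto
    ultimately show "S \<in> insert k ` extendable k" by blast
  qed
next
  show "insert k ` extendable k \<subseteq> {S \<in> indeps. k \<in> S}"
  proof
    fix S assume "S \<in> insert k ` extendable k"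
    then obtain R where R: "R \<in> extendable k" and S: "S = insert k R" by auto
    have "R \<subseteq> V" "is_indep adj R" "\<forall>j\<in>R. \<not> adj k j \<and> \<not> adj j k"
      using R adj_sym by (auto simp: extendable_def indeps_off_K_def indeps_def)
    then show "S \<in> {S \<in> indeps. k \<in> S}"
      using S k K_subset_V by (auto simp: indeps_def is_indep_def)
  qed
qed

lemma weighted_hS_insert:
  assumes k: "k \<in> K" and R: "R \<in> extendable k"
  shows "weighted_hS (insert k R) = u \<cdot>\<^sub>m (h k * weighted_hS R)"
proof -
  have RV: "R \<subseteq> V" "finite R"
    using R extendable_subset indeps_off_K_subset indepsD by blast+
  have kR: "k \<notin> R" and nadj: "\<forall>j\<in>R. \<not> adj k j"
    using k R by (auto simp: extendable_def indeps_off_K_def)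
  have "weighted_hS (insert k R) = u ^ Suc (card R) \<cdot>\<^sub>m (h k * hS n b R)"
    using hS_insert[OF RV(2,1) _ kR nadj] k K_subset_V RV kR by (auto simp: weighted_hS_def)
  then show ?thesis
    using h_carrier_K[OF k] hS_carrier[OF RV]
    by (simp add: weighted_hS_def square_mult_smult smult_smult_mat)
qed

text \<open>In the notation of the proof idea, \<open>T_off_K\<close> is \<open>A\<close>, \<open>T_ext k\<close> is \<open>B\<^sub>k\<close> and \<open>T_on_K\<close>
  is \<open>B\<close>.\<close>

definition T_off_K :: "complex mat" where
  "T_off_K = msum N weighted_hS indeps_off_K"

definition T_ext :: "nat list \<Rightarrow> complex mat" where
  "T_ext k = msum N weighted_hS (extendable k)"

definition T_on_K :: "complex mat" where
  "T_on_K = msum N (\<lambda>k. h k * T_ext k) K"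

lemma h_T_ext_carrier: "k \<in> K \<Longrightarrow> h k * T_ext k \<in> carrier_mat N N"
  unfolding T_ext_def by (rule mult_carrier_mat[OF h_carrier_K msum_carrier])

lemma inj_on_insert_extendable: "k \<in> K \<Longrightarrow> inj_on (insert k) (extendable k)"
  by (rule inj_onI) (auto simp: extendable_def indeps_off_K_def insert_ident)

lemma msum_weighted_hS_containing:
  assumes k: "k \<in> K"
  shows "msum N weighted_hS {S \<in> indeps. k \<in> S} = u \<cdot>\<^sub>m (h k * T_ext k)"
proof -
  have ext_carrier: "\<And>R. R \<in> extendable k \<Longrightarrow> weighted_hS R \<in> carrier_mat N N"
    using extendable_subset weighted_hS_carrier_off_K by blast
  have "msum N weighted_hS {S \<in> indeps. k \<in> S}
      = msum N (\<lambda>R. weighted_hS (insert k R)) (extendable k)"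
    unfolding indeps_containing_eq[OF k] using inj_on_insert_extendable[OF k] by (rule msum_reindex)
  also have "\<dots> = msum N (\<lambda>R. u \<cdot>\<^sub>m (h k * weighted_hS R)) (extendable k)"
    by (rule msum_cong) (rule weighted_hS_insert[OF k])
  also have "\<dots> = u \<cdot>\<^sub>m (h k * T_ext k)"
    unfolding T_ext_def using h_carrier_K[OF k] ext_carrier
    by (simp add: msum_smult msum_mult_left)
  finally show ?thesis .
qed

lemma TG_neg_eq: "TG n V b (- u) = T_off_K + u \<cdot>\<^sub>m T_on_K"
proof -
  have split: "indeps = indeps_off_K \<union> (\<Union>k\<in>K. {S \<in> indeps. k \<in> S})"
    by (auto simp: indeps_off_K_def)
  have "TG n V b (- u) = msum N weighted_hS indeps"
    unfolding TG_def weighted_hS_def indeps_def by simp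
  also have "\<dots> = T_off_K + msum N weighted_hS (\<Union>k\<in>K. {S \<in> indeps. k \<in> S})"
    unfolding T_off_K_def using finite_indeps_off_K finite_indeps
    by (subst split, intro msum_union_disjoint) (auto simp: indeps_off_K_def intro: finite_subset)
  also have "msum N weighted_hS (\<Union>k\<in>K. {S \<in> indeps. k \<in> S})
      = msum N (\<lambda>k. msum N weighted_hS {S \<in> indeps. k \<in> S}) K"
    using finite_K finite_indeps indeps_meets_K_once by (intro msum_UNION_disjoint) auto
  also have "\<dots> = msum N (\<lambda>k. u \<cdot>\<^sub>m (h k * T_ext k)) K"
    by (rule msum_cong) (rule msum_weighted_hS_containing)
  also have "\<dots> = u \<cdot>\<^sub>m T_on_K"
    unfolding T_on_K_def using h_T_ext_carrier by (rule msum_smult)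
  finally show ?thesis .
qed

lemma chi_commute_msum_weighted_hS:
  assumes "X \<subseteq> indeps_off_K"
  shows "chi * msum N weighted_hS X = msum N weighted_hS X * chi"
proof -
  have X_carrier: "\<And>R. R \<in> X \<Longrightarrow> weighted_hS R \<in> carrier_mat N N"
    using assms weighted_hS_carrier_off_K by blast
  have "chi * msum N weighted_hS X = msum N (\<lambda>R. chi * weighted_hS R) X"
    using chi_carrier X_carrier by (rule msum_mult_left[symmetric])
  also have "\<dots> = msum N (\<lambda>R. weighted_hS R * chi) X"
    using assms weighted_hS_mult_chi by (intro msum_cong) auto
  also have "\<dots> = msum N weighted_hS X * chi"
    using chi_carrier X_carrier by (rule msum_mult_right)
  finally show ?thesis .
qed

lemma chi_commute_T_off_K: "chi * T_off_K = T_off_K * chi"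
  unfolding T_off_K_def by (rule chi_commute_msum_weighted_hS) simp

lemma chi_anticommute_h_T_ext:
  assumes k: "k \<in> K"
  shows "chi * (h k * T_ext k) = - (h k * T_ext k * chi)"
proof -
  have hk: "h k \<in> carrier_mat N N" and T: "T_ext k \<in> carrier_mat N N"
    using h_carrier_K[OF k] by (auto simp: T_ext_def)
  have "chi * (h k * T_ext k) = (chi * h k) * T_ext k"
    using hk T chi_carrier by (simp add: square_mult_assoc)
  also have "\<dots> = - (h k * (chi * T_ext k))"
    using hk T chi_carrier carrier_matD[OF chi_carrier]
    by (simp add: chi_anticommute[OF k] square_mult_assoc)
  also have "chi * T_ext k = T_ext k * chi"
    unfolding T_ext_def using extendable_subset by (rule chi_commute_msum_weighted_hS)
  finally show ?thesis
    using hk T chi_carrier by (simp add: square_mult_assoc)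
qed

lemma chi_anticommute_T_on_K: "chi * T_on_K = - (T_on_K * chi)"
proof -
  have "chi * T_on_K = msum N (\<lambda>k. chi * (h k * T_ext k)) K"
    unfolding T_on_K_def using chi_carrier h_T_ext_carrier by (rule msum_mult_left[symmetric])
  also have "\<dots> = msum N (\<lambda>k. - (h k * T_ext k * chi)) K"
    by (rule msum_cong) (rule chi_anticommute_h_T_ext)
  also have "\<dots> = - msum N (\<lambda>k. h k * T_ext k * chi) K"
    using h_T_ext_carrier chi_carrier by (intro msum_uminus) (blast intro: mult_carrier_mat)
  also have "\<dots> = - (T_on_K * chi)"
    unfolding T_on_K_def using msum_mult_right[OF chi_carrier h_T_ext_carrier] by simp
  finally show ?thesis .
qed

abbreviation h_K :: "complex mat" where "h_K \<equiv> msum N h K"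

lemma h_anticommutator_T_off_K:
  assumes k: "k \<in> K"
  shows "h k * T_off_K + T_off_K * h k = 2 \<cdot>\<^sub>m (h k * T_ext k)"
proof -
  have hk: "h k \<in> carrier_mat N N"
    using h_carrier_K[OF k] .
  have hk_weighted: "\<And>R. R \<in> indeps_off_K \<Longrightarrow> h k * weighted_hS R \<in> carrier_mat N N"
    using hk weighted_hS_carrier_off_K by (blast intro: mult_carrier_mat)
  have "h k * T_off_K + T_off_K * h k
      = msum N (\<lambda>R. h k * weighted_hS R + weighted_hS R * h k) indeps_off_K"
    unfolding T_off_K_def using hk weighted_hS_carrier_off_K
    by (subst msum_add) (auto intro: mult_carrier_mat simp: msum_mult_left msum_mult_right)
  also have "\<dots> = msum N (\<lambda>R. (if R \<in> extendable k then 2 else 0) \<cdot>\<^sub>m (h k * weighted_hS R))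
      indeps_off_K"
    by (rule msum_cong) (simp add: weighted_hS_mult_h[OF k] add_smult_self_mat)
  also have "\<dots> = 2 \<cdot>\<^sub>m msum N (\<lambda>R. h k * weighted_hS R) (indeps_off_K \<inter> extendable k)"
    using finite_indeps_off_K hk_weighted by (rule msum_indicator_smult)
  also have "indeps_off_K \<inter> extendable k = extendable k"
    using extendable_subset by blast
  also have "msum N (\<lambda>R. h k * weighted_hS R) (extendable k) = h k * T_ext k"
    unfolding T_ext_def using hk extendable_subset weighted_hS_carrier_off_K
    by (intro msum_mult_left) blast+
  finally show ?thesis .
qed

lemma h_K_anticommutator_T_off_K: "h_K * T_off_K + T_off_K * h_K = 2 \<cdot>\<^sub>m T_on_K"
proof -
  have T: "T_off_K \<in> carrier_mat N N"
    by (simp add: T_off_K_def)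
  have "h_K * T_off_K + T_off_K * h_K = msum N (\<lambda>k. h k * T_off_K + T_off_K * h k) K"
    using T h_carrier_K
    by (subst msum_add) (auto intro: mult_carrier_mat simp: msum_mult_left msum_mult_right)
  also have "\<dots> = msum N (\<lambda>k. 2 \<cdot>\<^sub>m (h k * T_ext k)) K"
    by (rule msum_cong) (rule h_anticommutator_T_off_K)
  also have "\<dots> = 2 \<cdot>\<^sub>m T_on_K"
    unfolding T_on_K_def using h_T_ext_carrier by (rule msum_smult)
  finally show ?thesis .
qed

lemma T_ext_commute_h:
  assumes k: "k \<in> K"
  shows "T_ext k * h k = h k * T_ext k"
proof -
  have ext_carrier: "\<And>R. R \<in> extendable k \<Longrightarrow> weighted_hS R \<in> carrier_mat N N"
    using extendable_subset weighted_hS_carrier_off_K by blast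
  have "weighted_hS R * h k = h k * weighted_hS R" if "R \<in> extendable k" for R
    using weighted_hS_mult_h[OF k subsetD[OF extendable_subset that]] that
    by (simp add: one_smult_mat)
  then have "msum N (\<lambda>R. weighted_hS R * h k) (extendable k)
      = msum N (\<lambda>R. h k * weighted_hS R) (extendable k)"
    by (rule msum_cong)
  then show ?thesis
    unfolding T_ext_def by (simp add: msum_mult_left[OF h_carrier_K[OF k] ext_carrier]
        msum_mult_right[OF h_carrier_K[OF k] ext_carrier])
qed

lemma h_weighted_hS_h:
  assumes k: "k \<in> K" and k': "k' \<in> K" and "k \<noteq> k'" and R: "R \<in> indeps_off_K"
  shows "h k * weighted_hS R * h k'
    = (if R \<in> extendable k' then -1 else 1) \<cdot>\<^sub>m (h k' * h k * weighted_hS R)"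
proof -
  have hk: "h k \<in> carrier_mat N N" and hk': "h k' \<in> carrier_mat N N"
    and wR: "weighted_hS R \<in> carrier_mat N N"
    using h_carrier_K k k' weighted_hS_carrier_off_K R by auto
  have kk': "h k * h k' = - (h k' * h k)"
    using K_clique k k' \<open>k \<noteq> k'\<close> by (intro h_anticommute) (auto simp: is_clique_def)
  have "h k * weighted_hS R * h k'
      = (if R \<in> extendable k' then 1 else -1) \<cdot>\<^sub>m (h k * h k' * weighted_hS R)"
    using hk hk' wR by (simp add: weighted_hS_mult_h[OF k' R] square_mult_smult square_mult_assoc)
  also have "h k * h k' * weighted_hS R = (-1) \<cdot>\<^sub>m (h k' * h k * weighted_hS R)"
    unfolding kk' using hk hk' wR carrier_matD[OF wR] by (simp add: smult_minus_one_mat)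
  finally show ?thesis
    by (simp add: smult_smult_mat)
qed

lemma h_commutator_T_ext:
  assumes k: "k \<in> K" and k': "k' \<in> K" and "k \<noteq> k'"
  shows "h k' * (h k * T_ext k) - h k * T_ext k * h k'
    = 2 \<cdot>\<^sub>m (h k' * h k * msum N weighted_hS (extendable k \<inter> extendable k'))"
proof -
  have hk: "h k \<in> carrier_mat N N" and hk': "h k' \<in> carrier_mat N N"
    using h_carrier_K k k' by auto
  have ext_carrier: "\<And>R. R \<in> extendable k \<Longrightarrow> weighted_hS R \<in> carrier_mat N N"
    using extendable_subset weighted_hS_carrier_off_K by blast
  have hhw: "\<And>R. R \<in> extendable k \<Longrightarrow> h k' * h k * weighted_hS R \<in> carrier_mat N N"
    and hwh: "\<And>R. R \<in> extendable k \<Longrightarrow> h k * weighted_hS R * h k' \<in> carrier_mat N N"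
    using hk hk' ext_carrier by (blast intro: mult_carrier_mat)+
  have "h k' * (h k * T_ext k) - h k * T_ext k * h k'
      = msum N (\<lambda>R. h k' * h k * weighted_hS R) (extendable k)
        - msum N (\<lambda>R. h k * weighted_hS R * h k') (extendable k)"
    unfolding T_ext_def using hk hk' ext_carrier
    by (simp add: msum_mult_left msum_mult_right mult_carrier_mat[of _ N N] square_mult_assoc)
  also have "\<dots> = msum N (\<lambda>R. h k' * h k * weighted_hS R - h k * weighted_hS R * h k') (extendable k)"
    using hhw hwh by (rule msum_diff[symmetric])
  also have "\<dots> = msum N (\<lambda>R. (if R \<in> extendable k' then 2 else 0) \<cdot>\<^sub>m (h k' * h k * weighted_hS R))
      (extendable k)"
  proof (rule msum_cong)
    fix R assume "R \<in> extendable k"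
    then show "h k' * h k * weighted_hS R - h k * weighted_hS R * h k'
        = (if R \<in> extendable k' then 2 else 0) \<cdot>\<^sub>m (h k' * h k * weighted_hS R)"
      using h_weighted_hS_h[OF assms subsetD[OF extendable_subset]] by (simp add: diff_smult_self_mat)
  qed
  also have "\<dots> = 2 \<cdot>\<^sub>m msum N (\<lambda>R. h k' * h k * weighted_hS R) (extendable k \<inter> extendable k')"
    using finite_indeps_off_K extendable_subset hhw
    by (intro msum_indicator_smult) (auto intro: finite_subset)
  also have "msum N (\<lambda>R. h k' * h k * weighted_hS R) (extendable k \<inter> extendable k')
      = h k' * h k * msum N weighted_hS (extendable k \<inter> extendable k')"
    using hk hk' ext_carrier by (intro msum_mult_left) (blast intro: mult_carrier_mat)+
  finally show ?thesis .
qed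

lemma h_commutator_T_ext_antisym:
  assumes k: "k \<in> K" and k': "k' \<in> K"
  shows "h k' * (h k * T_ext k) - h k * T_ext k * h k'
    = - (h k * (h k' * T_ext k') - h k' * T_ext k' * h k)"
proof (cases "k = k'")
  case True
  have hk: "h k \<in> carrier_mat N N" and T: "T_ext k \<in> carrier_mat N N"
    using h_carrier_K[OF k] by (auto simp: T_ext_def)
  have "h k * (h k * T_ext k) - h k * T_ext k * h k = 0\<^sub>m N N"
    using hk T by (simp add: square_mult_assoc T_ext_commute_h[OF k])
  then show ?thesis
    using True by simp
next
  case False
  have hk: "h k \<in> carrier_mat N N" and hk': "h k' \<in> carrier_mat N N"
    using h_carrier_K k k' by auto
  have kk': "h k * h k' = - (h k' * h k)"
    using K_clique k k' False by (intro h_anticommute) (auto simp: is_clique_def)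
  show ?thesis
    unfolding h_commutator_T_ext[OF k k' False] h_commutator_T_ext[OF k' k False[symmetric]] kk'
    using hk hk' by (simp add: Int_commute) (rule eq_matI; simp)
qed

lemma h_K_commute_T_on_K: "h_K * T_on_K = T_on_K * h_K"
proof -
  define G where "G k k' = h k' * (h k * T_ext k) - h k * T_ext k * h k'" for k k'
  have T: "T_on_K \<in> carrier_mat N N"
    by (simp add: T_on_K_def)
  have hhT: "\<And>k k'. k \<in> K \<Longrightarrow> k' \<in> K \<Longrightarrow> h k' * (h k * T_ext k) \<in> carrier_mat N N"
    and hTh: "\<And>k k'. k \<in> K \<Longrightarrow> k' \<in> K \<Longrightarrow> h k * T_ext k * h k' \<in> carrier_mat N N"
    by (rule mult_carrier_mat[OF h_carrier_K h_T_ext_carrier]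
        mult_carrier_mat[OF h_T_ext_carrier h_carrier_K]; assumption)+
  have "h_K * T_on_K = msum N (\<lambda>k'. h k' * T_on_K) K"
    using msum_mult_right[of T_on_K N K h] T h_carrier_K by simp
  also have "\<dots> = msum N (\<lambda>k'. msum N (\<lambda>k. h k' * (h k * T_ext k)) K) K"
    unfolding T_on_K_def using h_carrier_K h_T_ext_carrier
    by (intro msum_cong) (simp add: msum_mult_left)
  also have "\<dots> = msum N (\<lambda>k. msum N (\<lambda>k'. h k' * (h k * T_ext k)) K) K"
    by (rule msum_swap)
  finally have left: "h_K * T_on_K = msum N (\<lambda>k. msum N (\<lambda>k'. h k' * (h k * T_ext k)) K) K" .
  have "T_on_K * h_K = msum N (\<lambda>k. h k * T_ext k * h_K) K"
    unfolding T_on_K_def using msum_mult_right[of h_K N K "\<lambda>k. h k * T_ext k"] h_T_ext_carrier by simp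
  also have "\<dots> = msum N (\<lambda>k. msum N (\<lambda>k'. h k * T_ext k * h k') K) K"
    using h_carrier_K h_T_ext_carrier by (intro msum_cong) (simp add: msum_mult_left)
  finally have right: "T_on_K * h_K = msum N (\<lambda>k. msum N (\<lambda>k'. h k * T_ext k * h k') K) K" .
  have "h_K * T_on_K - T_on_K * h_K
      = msum N (\<lambda>k. msum N (\<lambda>k'. h k' * (h k * T_ext k)) K - msum N (\<lambda>k'. h k * T_ext k * h k') K) K"
    unfolding left right by (rule msum_diff[symmetric]) simp_all
  also have "\<dots> = msum N (\<lambda>k. msum N (G k) K) K"
    unfolding G_def using hhT hTh by (intro msum_cong msum_diff[symmetric]) auto
  also have "\<dots> = 0\<^sub>m N N"
    unfolding G_def
    by (rule msum_antisym_eq_zero[OF h_commutator_T_ext_antisym minus_carrier_mat[OF hTh]])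
  finally show ?thesis
    by (rule eq_of_diff_eq_zero_mat)
      (simp_all add: mult_carrier_mat[OF T msum_carrier] mult_carrier_mat[OF msum_carrier T])
qed

lemma intertwining:
  "(1\<^sub>m N + u \<cdot>\<^sub>m h_K) * chi * TG n V b (- u) = TG n V b (- u) * (1\<^sub>m N - u \<cdot>\<^sub>m h_K) * chi"
  unfolding TG_neg_eq
  by (rule intertwining_from_relations[OF _ _ _ chi_carrier chi_commute_T_off_K chi_anticommute_T_on_K
        h_K_anticommutator_T_off_K h_K_commute_T_on_K])
    (simp_all add: T_off_K_def T_on_K_def)

lemma simplicial_mode_identity:
  "TG n V b u * (1\<^sub>m N + u \<cdot>\<^sub>m h_K) * chi * TG n V b (- u)
    = ZG_neg_sq n V b u * (1\<^sub>m N - u \<cdot>\<^sub>m h_K) * chi"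
proof -
  have plus: "(1\<^sub>m N + u \<cdot>\<^sub>m h_K) * chi \<in> carrier_mat N N"
    by (rule mult_carrier_mat[OF _ chi_carrier]) simp
  have minus: "1\<^sub>m N - u \<cdot>\<^sub>m h_K \<in> carrier_mat N N"
    by (auto intro: minus_carrier_mat)
  have T: "TG n V b u \<in> carrier_mat N N" "TG n V b (- u) \<in> carrier_mat N N"
    by (rule TG_carrier)+
  have "TG n V b u * (1\<^sub>m N + u \<cdot>\<^sub>m h_K) * chi * TG n V b (- u)
      = TG n V b u * ((1\<^sub>m N + u \<cdot>\<^sub>m h_K) * chi * TG n V b (- u))"
    using plus T chi_carrier by (simp add: square_mult_assoc)
  also have "\<dots> = TG n V b u * (TG n V b (- u) * (1\<^sub>m N - u \<cdot>\<^sub>m h_K) * chi)"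
    by (simp only: intertwining)
  also have "\<dots> = ZG_neg_sq n V b u * (1\<^sub>m N - u \<cdot>\<^sub>m h_K) * chi"
    using minus T chi_carrier mult_carrier_mat[OF T(2) minus]
    by (simp add: ZG_neg_sq_def square_mult_assoc)
  finally show ?thesis .
qed

end

theorem lemma12:
  fixes n :: nat and V :: "nat list set" and b :: "nat list \<Rightarrow> real"
    and K :: "nat list set" and jstar :: "nat list" and u :: complex
  assumes "finite V"
    and "\<forall>j\<in>V. is_pauli_string n j"
    and "\<forall>j\<in>V. b j \<noteq> 0"
    and "claw_free V (frust b)"
    and "simplicial_clique V (frust b) K"
    and "is_pauli_string n jstar" and "jstar \<notin> V"
    and "\<forall>k\<in>V. anticommute (pauli_mat jstar) (hterm b k) \<longleftrightarrow> k \<in> K"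
  shows "TG n V b u * (1\<^sub>m (2 ^ n) + u \<cdot>\<^sub>m msum (2 ^ n) (hterm b) K) * pauli_mat jstar * TG n V b (- u)
       = ZG_neg_sq n V b u * (1\<^sub>m (2 ^ n) - u \<cdot>\<^sub>m msum (2 ^ n) (hterm b) K) * pauli_mat jstar"
proof -
  interpret simplicial_mode n V b K "pauli_mat jstar" u
  proof
    show "hterm b j * hterm b k = hterm b k * hterm b j \<or> anticommute (hterm b j) (hterm b k)"
      if "j \<in> V" "k \<in> V" for j k
      using that assms(2) smult_pauli_mat_commute_or_anticommute[of n j k] by (simp add: hterm_def)
    show "pauli_mat jstar * hterm b k = hterm b k * pauli_mat jstar
        \<or> anticommute (pauli_mat jstar) (hterm b k)" if "k \<in> V" for k
      using that assms(2,6) smult_pauli_mat_commute_or_anticommute[of n jstar k 1]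
      by (simp add: hterm_def one_smult_mat)
  qed (use assms pauli_mat_carrier_string in \<open>auto simp: hterm_def\<close>)
  show ?thesis
    by (rule simplicial_mode_identity)
qed

end
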